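(* Let $\mathcal C$ be an operadic category. The category $\mathrm{Coll}_{\mathcal C}^U$ of right $U$-modules in $\mathrm{Coll}_{\mathcal C}$ is equivalent to the category $[\mathbb C^{\mathrm{op}},\mathbf{Set}]$ of presheaves on $\mathbb C$.
   Context: Operadic categories: $\mathcal S$ is a skeleton of finite sets, with fixed equivalences $R_I:\mathcal S/I\to\mathcal S^I$ sending $f:J\to I$ to its fibres. An operadic category is a category $\mathcal C$ with a functor $|\cdot|:\mathcal C\to\mathcal S$ and functors $R_c:\mathcal C/c\to\mathcal C^{|c|}$ with $|\cdot|^{|c|}\circ R_c=R_{|c|}\circ(|\cdot|/c)$; the fibre $\psi^{-1}i$ of $\psi:c\to d$ at $i\in|d|$ is the $i$-th component of $R_d(\psi)$; $\varphi^\psi=R_d(\varphi:\psi\varphi\to\psi)$ for $\varphi:b\to c,\psi:c\to d$; $u$ is trivial if $|u|=1$ and $R_u=\mathrm{dom}$. Axioms: fibres of identities are trivial; double slice condition: for $\psi:c\to d$, $R_c\circ(\mathrm{dom}/\psi)=(\cong)\circ(\prod_jR_{\psi^{-1}j})\circ(R_d/\psi)$ as functors $(\mathcal C/d)/\psi\to\mathcal C^{|c|}$, via $\mathcal C^{|d|}/R_d\psi\cong\prod_j\mathcal C/\psi^{-1}j$ and $|c|\cong\sum_j|\psi|^{-1}j$. A morphism is fibrewise trivial if all its fibres are trivial; these form a wide subcategory $\mathbb C$ of $\mathcal C$. $\mathrm{Coll}_{\mathcal C}$ is the skew monoidal category with underlying category $\mathbf{Set}/C$ ($C$ = object set; objects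 $\partial:X\to C$, $X_c=\partial^{-1}c$), tensor $(X*Y)_c=\sum_{\varphi:c\to d}X_d\times\prod_{i\in|d|}Y_{\varphi^{-1}i}$ (elements $(x,\varphi,y)$), unit $U$ the set of trivial objects, and maps $\alpha(x,\psi,y,\varphi,z)=(x,\psi\varphi,y,\varphi^\psi,z)$, $\lambda(u,\varphi,x)=x$, $\rho(x)=(x,1_{\partial x},(1_{\partial x}^{-1}i)_i)$. A right $U$-module is an object $X$ with $r:X*U\to X$ such that $r\circ(r*1)=r\circ(1*\lambda_U)\circ\alpha_{X,U,U}$ and $r\circ\rho_X=1_X$; morphisms are maps commuting with the actions. $\mathrm{Coll}_{\mathcal C}^U$ denotes this category of right $U$-modules. *)

theory Defs
  imports Main "HOL-Library.FuncSet"
begin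

record ('o,'m) category =
  Obj  :: "'o set"
  Arr  :: "'m set"
  Dom  :: "'m \<Rightarrow> 'o"
  Cod  :: "'m \<Rightarrow> 'o"
  Idm  :: "'o \<Rightarrow> 'm"
  Comp :: "'m \<Rightarrow> 'm \<Rightarrow> 'm"   (* Comp g f = g \<circ> f *)

definition is_category :: "('o,'m,'z) category_scheme \<Rightarrow> bool" where
  "is_category C \<longleftrightarrow>
     (\<forall>f\<in>Arr C. Dom C f \<in> Obj C \<and> Cod C f \<in> Obj C) \<and>
     (\<forall>a\<in>Obj C. Idm C a \<in> Arr C \<and> Dom C (Idm C a) = a \<and> Cod C (Idm C a) = a) \<and>
     (\<forall>f\<in>Arr C. \<forall>g\<in>Arr C. Cod C f = Dom C g \<longrightarrow>
        Comp C g f \<in> Arr C \<and> Dom C (Comp C g f) = Dom C f \<and> Cod C (Comp C g f) = Cod C g) \<and>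
     (\<forall>f\<in>Arr C. Comp C f (Idm C (Dom C f)) = f \<and> Comp C (Idm C (Cod C f)) f = f) \<and>
     (\<forall>f\<in>Arr C. \<forall>g\<in>Arr C. \<forall>h\<in>Arr C. Cod C f = Dom C g \<and> Cod C g = Dom C h \<longrightarrow>
        Comp C h (Comp C g f) = Comp C (Comp C h g) f)"

definition is_functor ::
  "('a,'b) category \<Rightarrow> ('c,'d) category \<Rightarrow> ('a \<Rightarrow> 'c) \<Rightarrow> ('b \<Rightarrow> 'd) \<Rightarrow> bool" where
  "is_functor A B Fo Fa \<longleftrightarrow>
     (\<forall>a\<in>Obj A. Fo a \<in> Obj B) \<and>
     (\<forall>f\<in>Arr A. Fa f \<in> Arr B \<and> Dom B (Fa f) = Fo (Dom A f) \<and> Cod B (Fa f) = Fo (Cod A f)) \<and>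
     (\<forall>a\<in>Obj A. Fa (Idm A a) = Idm B (Fo a)) \<and>
     (\<forall>f\<in>Arr A. \<forall>g\<in>Arr A. Cod A f = Dom A g \<longrightarrow> Fa (Comp A g f) = Comp B (Fa g) (Fa f))"

definition is_iso :: "('c,'d) category \<Rightarrow> 'd \<Rightarrow> bool" where
  "is_iso B f \<longleftrightarrow> f \<in> Arr B \<and>
     (\<exists>g\<in>Arr B. Dom B g = Cod B f \<and> Cod B g = Dom B f \<and>
        Comp B g f = Idm B (Dom B f) \<and> Comp B f g = Idm B (Cod B f))"

definition is_nat_iso ::
  "('a,'b) category \<Rightarrow> ('c,'d) category \<Rightarrow> ('a \<Rightarrow> 'c) \<Rightarrow> ('b \<Rightarrow> 'd) \<Rightarrow>
   ('a \<Rightarrow> 'c) \<Rightarrow> ('b \<Rightarrow> 'd) \<Rightarrow> ('a \<Rightarrow> 'd) \<Rightarrow> bool" where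
  "is_nat_iso A B Fo Fa Go Ga eta \<longleftrightarrow>
     (\<forall>a\<in>Obj A. eta a \<in> Arr B \<and> Dom B (eta a) = Fo a \<and> Cod B (eta a) = Go a \<and> is_iso B (eta a)) \<and>
     (\<forall>f\<in>Arr A. Comp B (eta (Cod A f)) (Fa f) = Comp B (Ga f) (eta (Dom A f)))"

definition equivalent_categories :: "('a,'b) category \<Rightarrow> ('c,'d) category \<Rightarrow> bool" where
  "equivalent_categories A B \<longleftrightarrow>
     (\<exists>Fo Fa Go Ga eta eps.
        is_functor A B Fo Fa \<and> is_functor B A Go Ga \<and>
        is_nat_iso A A id id (Go \<circ> Fo) (Ga \<circ> Fa) eta \<and>
        is_nat_iso B B (Fo \<circ> Go) (Fa \<circ> Ga) id id eps)"

text \<open>A presheaf is a pair (F0, F1): F0 c is a set, F1 f : F0 (Cod f) -> F0 (Dom f).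
  Data are extensional (undefined / empty outside their domain), so that equal
  presheaves and equal natural transformations are equal as HOL values.\<close>

type_synonym ('o,'m,'x) psh = "('o \<Rightarrow> 'x set) \<times> ('m \<Rightarrow> 'x \<Rightarrow> 'x)"
type_synonym ('o,'m,'x) psh_arr = "('o,'m,'x) psh \<times> ('o,'m,'x) psh \<times> ('o \<Rightarrow> 'x \<Rightarrow> 'x)"

definition is_presheaf :: "('o,'m) category \<Rightarrow> ('o,'m,'x) psh \<Rightarrow> bool" where
  "is_presheaf D F \<longleftrightarrow>
     (\<forall>c. c \<notin> Obj D \<longrightarrow> fst F c = {}) \<and>
     (\<forall>f\<in>Arr D. \<forall>x\<in>fst F (Cod D f). snd F f x \<in> fst F (Dom D f)) \<and>
     (\<forall>a\<in>Obj D. \<forall>x\<in>fst F a. snd F (Idm D a) x = x) \<and>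
     (\<forall>f\<in>Arr D. \<forall>g\<in>Arr D. Cod D f = Dom D g \<longrightarrow>
        (\<forall>x\<in>fst F (Cod D g). snd F (Comp D g f) x = snd F f (snd F g x))) \<and>
     (\<forall>f x. \<not> (f \<in> Arr D \<and> x \<in> fst F (Cod D f)) \<longrightarrow> snd F f x = undefined)"

definition is_psh_nat :: "('o,'m) category \<Rightarrow> ('o,'m,'x) psh \<Rightarrow> ('o,'m,'x) psh \<Rightarrow> ('o \<Rightarrow> 'x \<Rightarrow> 'x) \<Rightarrow> bool" where
  "is_psh_nat D F G eta \<longleftrightarrow>
     (\<forall>c\<in>Obj D. \<forall>x\<in>fst F c. eta c x \<in> fst G c) \<and>
     (\<forall>f\<in>Arr D. \<forall>x\<in>fst F (Cod D f). eta (Dom D f) (snd F f x) = snd G f (eta (Cod D f) x)) \<and>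
     (\<forall>c x. x \<notin> fst F c \<longrightarrow> eta c x = undefined)"

definition PSh :: "('o,'m) category \<Rightarrow> (('o,'m,'x) psh, ('o,'m,'x) psh_arr) category" where
  "PSh D = \<lparr> Obj = {F. is_presheaf D F},
             Arr = {(F, G, eta). is_presheaf D F \<and> is_presheaf D G \<and> is_psh_nat D F G eta},
             Dom = (\<lambda>(F, G, eta). F),
             Cod = (\<lambda>(F, G, eta). G),
             Idm = (\<lambda>F. (F, F, \<lambda>c. \<lambda>x\<in>fst F c. x)),
             Comp = (\<lambda>(G', H, th) (F, G, eta). (F, H, \<lambda>c. \<lambda>x\<in>fst F c. th c (eta c x))) \<rparr>"

text \<open>The skeleton S of finite sets has objects n (standing for {0..<n}) and morphisms
  functions between these.  An operadic category is a category together with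
  cardO : objects -> nat, cardM : morphisms -> S-morphisms (the functor |.|),
  and the functors R_d : C/d -> C^|d| given by
  fib psi i   (the i-th fibre of psi : c -> d, i < |d|), and
  fibm phi psi i : fib (psi o phi) i -> fib psi i (R_d applied to phi : psi o phi -> psi).\<close>

record ('o,'m) opcat = "('o,'m) category" +
  cardO :: "'o \<Rightarrow> nat"
  cardM :: "'m \<Rightarrow> nat \<Rightarrow> nat"
  fib   :: "'m \<Rightarrow> nat \<Rightarrow> 'o"
  fibm  :: "'m \<Rightarrow> 'm \<Rightarrow> nat \<Rightarrow> 'm"

text \<open>Preimage (fibre in S) of i under |psi|, and the position of j in a finite set of naturals;
  the fixed equivalences R_I of S enumerate fibres in increasing order.\<close>

definition fpre :: "('o,'m) opcat \<Rightarrow> 'm \<Rightarrow> nat \<Rightarrow> nat set" where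
  "fpre C psi i = {j. j < cardO C (Dom C psi) \<and> cardM C psi j = i}"

definition fpos :: "nat set \<Rightarrow> nat \<Rightarrow> nat" where
  "fpos A j = card {x\<in>A. x < j}"

definition trivial_obj :: "('o,'m) opcat \<Rightarrow> 'o \<Rightarrow> bool" where
  "trivial_obj C u \<longleftrightarrow> u \<in> Obj C \<and> cardO C u = 1 \<and>
     (\<forall>psi\<in>Arr C. Cod C psi = u \<longrightarrow> fib C psi 0 = Dom C psi) \<and>
     (\<forall>phi\<in>Arr C. \<forall>psi\<in>Arr C. Cod C phi = Dom C psi \<and> Cod C psi = u \<longrightarrow> fibm C phi psi 0 = phi)"

definition operadic_category :: "('o,'m) opcat \<Rightarrow> bool" where
  "operadic_category C \<longleftrightarrow>
     is_category C \<and>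
     \<comment> \<open>|.| is a functor C -> S\<close>
     (\<forall>f\<in>Arr C. \<forall>j<cardO C (Dom C f). cardM C f j < cardO C (Cod C f)) \<and>
     (\<forall>a\<in>Obj C. \<forall>j<cardO C a. cardM C (Idm C a) j = j) \<and>
     (\<forall>f\<in>Arr C. \<forall>g\<in>Arr C. Cod C f = Dom C g \<longrightarrow>
        (\<forall>j<cardO C (Dom C f). cardM C (Comp C g f) j = cardM C g (cardM C f j))) \<and>
     \<comment> \<open>R_d is a functor C/d -> C^|d|\<close>
     (\<forall>psi\<in>Arr C. \<forall>i<cardO C (Cod C psi). fib C psi i \<in> Obj C) \<and>
     (\<forall>phi\<in>Arr C. \<forall>psi\<in>Arr C. Cod C phi = Dom C psi \<longrightarrow> (\<forall>i<cardO C (Cod C psi).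
        fibm C phi psi i \<in> Arr C \<and>
        Dom C (fibm C phi psi i) = fib C (Comp C psi phi) i \<and>
        Cod C (fibm C phi psi i) = fib C psi i)) \<and>
     (\<forall>psi\<in>Arr C. \<forall>i<cardO C (Cod C psi). fibm C (Idm C (Dom C psi)) psi i = Idm C (fib C psi i)) \<and>
     (\<forall>phi\<in>Arr C. \<forall>phi'\<in>Arr C. \<forall>psi\<in>Arr C. Cod C phi = Dom C phi' \<and> Cod C phi' = Dom C psi \<longrightarrow>
        (\<forall>i<cardO C (Cod C psi). fibm C (Comp C phi' phi) psi i =
            Comp C (fibm C phi' psi i) (fibm C phi (Comp C psi phi') i))) \<and>
     \<comment> \<open>compatibility  |.|^|d| o R_d = R_|d| o (|.|/d)\<close>
     (\<forall>psi\<in>Arr C. \<forall>i<cardO C (Cod C psi). cardO C (fib C psi i) = card (fpre C psi i)) \<and>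
     (\<forall>phi\<in>Arr C. \<forall>psi\<in>Arr C. Cod C phi = Dom C psi \<longrightarrow> (\<forall>i<cardO C (Cod C psi).
        \<forall>k<cardO C (fib C (Comp C psi phi) i).
          cardM C (fibm C phi psi i) k =
            fpos (fpre C psi i) (cardM C phi (sorted_list_of_set (fpre C (Comp C psi phi) i) ! k)))) \<and>
     \<comment> \<open>fibres of identities are trivial\<close>
     (\<forall>a\<in>Obj C. \<forall>i<cardO C a. trivial_obj C (fib C (Idm C a) i)) \<and>
     \<comment> \<open>double slice condition, for psi : c -> d, objects phi : b -> c and morphisms sigma of (C/d)/psi;
         j < |c| corresponds to (i, k) = (|psi| j, position of j in |psi|^-1 i)\<close>
     (\<forall>psi\<in>Arr C. \<forall>phi\<in>Arr C. Cod C phi = Dom C psi \<longrightarrow> (\<forall>j<cardO C (Dom C psi).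
        fib C phi j = fib C (fibm C phi psi (cardM C psi j)) (fpos (fpre C psi (cardM C psi j)) j))) \<and>
     (\<forall>psi\<in>Arr C. \<forall>phi\<in>Arr C. \<forall>sigma\<in>Arr C. Cod C sigma = Dom C phi \<and> Cod C phi = Dom C psi \<longrightarrow>
        (\<forall>j<cardO C (Dom C psi).
          fibm C sigma phi j =
            fibm C (fibm C sigma (Comp C psi phi) (cardM C psi j)) (fibm C phi psi (cardM C psi j))
                   (fpos (fpre C psi (cardM C psi j)) j)))"

definition fibrewise_trivial :: "('o,'m) opcat \<Rightarrow> 'm \<Rightarrow> bool" where
  "fibrewise_trivial C phi \<longleftrightarrow> phi \<in> Arr C \<and>
     (\<forall>i<cardO C (Cod C phi). trivial_obj C (fib C phi i))"

definition FwTriv :: "('o,'m) opcat \<Rightarrow> ('o,'m) category" where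
  "FwTriv C = \<lparr> Obj = Obj C, Arr = {phi. fibrewise_trivial C phi}, Dom = Dom C, Cod = Cod C,
                Idm = Idm C, Comp = Comp C \<rparr>"

text \<open>An object X of Set/C (C = set of objects) is represented by its family of fibres X c = X_c
  (empty outside the objects).\<close>

definition tensor :: "('o,'m) opcat \<Rightarrow> ('o \<Rightarrow> 'a set) \<Rightarrow> ('o \<Rightarrow> 'b set) \<Rightarrow> 'o \<Rightarrow> ('a \<times> 'm \<times> (nat \<Rightarrow> 'b)) set" where
  "tensor C X Y c = {(x, phi, y). phi \<in> Arr C \<and> Dom C phi = c \<and> x \<in> X (Cod C phi) \<and>
                        y \<in> PiE {..<cardO C (Cod C phi)} (\<lambda>i. Y (fib C phi i))}"

definition unitU :: "('o,'m) opcat \<Rightarrow> 'o \<Rightarrow> 'o set" where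
  "unitU C c = (if trivial_obj C c then {c} else {})"

definition assocC :: "('o,'m) opcat \<Rightarrow> ('a \<times> 'm \<times> (nat \<Rightarrow> 'b)) \<times> 'm \<times> (nat \<Rightarrow> 'c)
                        \<Rightarrow> 'a \<times> 'm \<times> (nat \<Rightarrow> 'b \<times> 'm \<times> (nat \<Rightarrow> 'c))" where
  "assocC C e = (case e of ((x, psi, y), phi, z) \<Rightarrow>
     (x, Comp C psi phi,
      \<lambda>i\<in>{..<cardO C (Cod C psi)}.
        (y i, fibm C phi psi i,
         \<lambda>k\<in>{..<cardO C (fib C psi i)}. z (sorted_list_of_set (fpre C psi i) ! k))))"

definition lamU :: "'o \<times> 'm \<times> (nat \<Rightarrow> 'b) \<Rightarrow> 'b" where
  "lamU e = (case e of (u, phi, y) \<Rightarrow> y 0)"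

definition one_lam :: "('o,'m) opcat \<Rightarrow> 'a \<times> 'm \<times> (nat \<Rightarrow> 'o \<times> 'm \<times> (nat \<Rightarrow> 'o)) \<Rightarrow> 'a \<times> 'm \<times> (nat \<Rightarrow> 'o)" where
  "one_lam C e = (case e of (x, th, w) \<Rightarrow> (x, th, \<lambda>i\<in>{..<cardO C (Cod C th)}. lamU (w i)))"

definition r_one :: "('a \<times> 'm \<times> (nat \<Rightarrow> 'o) \<Rightarrow> 'a) \<Rightarrow> ('a \<times> 'm \<times> (nat \<Rightarrow> 'o)) \<times> 'm \<times> (nat \<Rightarrow> 'o)
                       \<Rightarrow> 'a \<times> 'm \<times> (nat \<Rightarrow> 'o)" where
  "r_one r e = (case e of (xe, phi, z) \<Rightarrow> (r xe, phi, z))"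

definition rhoC :: "('o,'m) opcat \<Rightarrow> 'o \<Rightarrow> 'a \<Rightarrow> 'a \<times> 'm \<times> (nat \<Rightarrow> 'o)" where
  "rhoC C c x = (x, Idm C c, \<lambda>i\<in>{..<cardO C c}. fib C (Idm C c) i)"

type_synonym ('o,'m,'x) rmod = "('o \<Rightarrow> 'x set) \<times> ('x \<times> 'm \<times> (nat \<Rightarrow> 'o) \<Rightarrow> 'x)"
type_synonym ('o,'m,'x) rmod_arr = "('o,'m,'x) rmod \<times> ('o,'m,'x) rmod \<times> ('o \<Rightarrow> 'x \<Rightarrow> 'x)"

definition is_right_U_module :: "('o,'m) opcat \<Rightarrow> ('o,'m,'x) rmod \<Rightarrow> bool" where
  "is_right_U_module C M \<longleftrightarrow> (case M of (X, r) \<Rightarrow>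
     (\<forall>c. c \<notin> Obj C \<longrightarrow> X c = {}) \<and>
     (\<forall>c\<in>Obj C. \<forall>e\<in>tensor C X (unitU C) c. r e \<in> X c) \<and>
     (\<forall>e. e \<notin> (\<Union>c\<in>Obj C. tensor C X (unitU C) c) \<longrightarrow> r e = undefined) \<and>
     (\<forall>c\<in>Obj C. \<forall>e\<in>tensor C (tensor C X (unitU C)) (unitU C) c.
        r (r_one r e) = r (one_lam C (assocC C e))) \<and>
     (\<forall>c\<in>Obj C. \<forall>x\<in>X c. r (rhoC C c x) = x))"

definition is_module_map :: "('o,'m) opcat \<Rightarrow> ('o,'m,'x) rmod \<Rightarrow> ('o,'m,'x) rmod \<Rightarrow> ('o \<Rightarrow> 'x \<Rightarrow> 'x) \<Rightarrow> bool" where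
  "is_module_map C M N f \<longleftrightarrow> (case M of (X, r) \<Rightarrow> case N of (Y, s) \<Rightarrow>
     (\<forall>c\<in>Obj C. \<forall>x\<in>X c. f c x \<in> Y c) \<and>
     (\<forall>c\<in>Obj C. \<forall>x phi z. (x, phi, z) \<in> tensor C X (unitU C) c \<longrightarrow>
        f c (r (x, phi, z)) = s (f (Cod C phi) x, phi, z)) \<and>
     (\<forall>c x. x \<notin> X c \<longrightarrow> f c x = undefined))"

definition ModU :: "('o,'m) opcat \<Rightarrow> (('o,'m,'x) rmod, ('o,'m,'x) rmod_arr) category" where
  "ModU C = \<lparr> Obj = {M. is_right_U_module C M},
              Arr = {(M, N, f). is_right_U_module C M \<and> is_right_U_module C N \<and> is_module_map C M N f},
              Dom = (\<lambda>(M, N, f). M),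
              Cod = (\<lambda>(M, N, f). N),
              Idm = (\<lambda>M. (M, M, \<lambda>c. \<lambda>x\<in>fst M c. x)),
              Comp = (\<lambda>(N', P, g) (M, N, f). (M, P, \<lambda>c. \<lambda>x\<in>fst M c. g c (f c x))) \<rparr>"

end

theory Submission
  imports Defs
begin

text \<open>An element of X * U of degree c is a triple (x, phi, y) with phi : c \<rightarrow> d, and
  y i \<in> U (phi\<inverse> i) forces the fibre phi\<inverse> i to be trivial and y i to be that fibre.
  So such triples exist exactly for fibrewise trivial phi, y is determined by phi, and a right
  U-action on X is the same as a map x \<mapsto> x\<cdot>phi for fibrewise trivial phi.  The double slice
  condition shows that the fibres of a composite psi phi of fibrewise trivial maps are fibres of
  phi; hence the associativity axiom of the action becomes (x\<cdot>psi)\<cdot>phi = x\<cdot>(psi phi), and the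
  unit axiom becomes x\<cdot>1 = x.  The two categories are therefore even isomorphic.\<close>

lemma is_categoryD:
  assumes "is_category C"
  shows "f \<in> Arr C \<Longrightarrow> Dom C f \<in> Obj C" "f \<in> Arr C \<Longrightarrow> Cod C f \<in> Obj C"
    "a \<in> Obj C \<Longrightarrow> Idm C a \<in> Arr C" "a \<in> Obj C \<Longrightarrow> Dom C (Idm C a) = a"
    "a \<in> Obj C \<Longrightarrow> Cod C (Idm C a) = a"
    "f \<in> Arr C \<Longrightarrow> g \<in> Arr C \<Longrightarrow> Cod C f = Dom C g \<Longrightarrow> Comp C g f \<in> Arr C"
    "f \<in> Arr C \<Longrightarrow> g \<in> Arr C \<Longrightarrow> Cod C f = Dom C g \<Longrightarrow> Dom C (Comp C g f) = Dom C f"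
    "f \<in> Arr C \<Longrightarrow> g \<in> Arr C \<Longrightarrow> Cod C f = Dom C g \<Longrightarrow> Cod C (Comp C g f) = Cod C g"
  using assms unfolding is_category_def by auto

definition identity_laws :: "('a,'b) category \<Rightarrow> bool" where
  "identity_laws A \<longleftrightarrow> (\<forall>f\<in>Arr A. Dom A f \<in> Obj A \<and> Cod A f \<in> Obj A) \<and>
     (\<forall>a\<in>Obj A. Idm A a \<in> Arr A \<and> Dom A (Idm A a) = a \<and> Cod A (Idm A a) = a) \<and>
     (\<forall>f\<in>Arr A. Comp A f (Idm A (Dom A f)) = f \<and> Comp A (Idm A (Cod A f)) f = f)"

lemma inverse_functors_equivalent:
  fixes A :: "('a,'b) category" and B :: "('c,'d) category"
  assumes "is_functor A B Fo Fa" and "is_functor B A Go Ga"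
    and "\<forall>a\<in>Obj A. Go (Fo a) = a" "\<forall>f\<in>Arr A. Ga (Fa f) = f"
    and "\<forall>b\<in>Obj B. Fo (Go b) = b" "\<forall>f\<in>Arr B. Fa (Ga f) = f"
    and "identity_laws A" and "identity_laws B"
  shows "equivalent_categories A B"
  unfolding equivalent_categories_def
proof (intro exI conjI)
  show "is_nat_iso A A id id (Go \<circ> Fo) (Ga \<circ> Fa) (Idm A)"
    using assms(3,4,7) unfolding is_nat_iso_def is_iso_def identity_laws_def by (auto 4 4)
  show "is_nat_iso B B (Fo \<circ> Go) (Fa \<circ> Ga) id id (Idm B)"
    using assms(5,6,8) unfolding is_nat_iso_def is_iso_def identity_laws_def by (auto 4 4)
qed (use assms in auto)

lemma identity_laws_PSh: "identity_laws (PSh D)"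
proof -
  have "is_psh_nat D F F (\<lambda>c. \<lambda>x\<in>fst F c. x)" if "is_presheaf D F" for F
    using that unfolding is_psh_nat_def is_presheaf_def by auto
  moreover have "(\<lambda>c. \<lambda>x\<in>fst F c. eta c ((\<lambda>x\<in>fst F c. x) x)) = eta"
    and "(\<lambda>c. \<lambda>x\<in>fst F c. (\<lambda>x\<in>fst G c. x) (eta c x)) = eta"
    if "is_presheaf D F" "is_psh_nat D F G eta" for F G eta
    using that unfolding is_psh_nat_def is_presheaf_def
    by (auto intro!: ext) (metis empty_iff)+
  ultimately show ?thesis unfolding identity_laws_def PSh_def by auto
qed

lemma identity_laws_ModU: "identity_laws (ModU C)"
proof -
  have "is_module_map C M M (\<lambda>c. \<lambda>x\<in>fst M c. x)" if "is_right_U_module C M" for M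
    using that unfolding is_module_map_def is_right_U_module_def by (auto simp: tensor_def)
  moreover have "(\<lambda>c. \<lambda>x\<in>fst M c. f c ((\<lambda>x\<in>fst M c. x) x)) = f"
    and "(\<lambda>c. \<lambda>x\<in>fst M c. (\<lambda>x\<in>fst N c. x) (f c x)) = f"
    if "is_right_U_module C M" "is_module_map C M N f" for M N f
    using that unfolding is_module_map_def is_right_U_module_def
    by (auto intro!: ext split: prod.splits) (metis empty_iff)+
  ultimately show ?thesis unfolding identity_laws_def ModU_def by auto
qed

definition fibres :: "('o,'m) opcat \<Rightarrow> 'm \<Rightarrow> nat \<Rightarrow> 'o" where
  "fibres C phi = (\<lambda>i\<in>{..<cardO C (Cod C phi)}. fib C phi i)"

lemma fibres_in_unit_family_iff:
  "fibres C phi \<in> (\<Pi>\<^sub>E i\<in>{..<cardO C (Cod C phi)}. unitU C (fib C phi i))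
    \<longleftrightarrow> (\<forall>i<cardO C (Cod C phi). trivial_obj C (fib C phi i))"
  by (auto simp: fibres_def unitU_def PiE_iff)

lemma unit_family_eq_fibres:
  assumes "y \<in> (\<Pi>\<^sub>E i\<in>{..<cardO C (Cod C phi)}. unitU C (fib C phi i))"
  shows "y = fibres C phi"
proof
  fix i show "y i = fibres C phi i"
    using assms by (cases "i < cardO C (Cod C phi)") (auto simp: fibres_def unitU_def PiE_iff
      extensional_def split: if_splits)
qed

lemma tensor_unit_iff:
  "(x, phi, y) \<in> tensor C X (unitU C) c \<longleftrightarrow>
    fibrewise_trivial C phi \<and> Dom C phi = c \<and> x \<in> X (Cod C phi) \<and> y = fibres C phi"
proof -
  have "y \<in> (\<Pi>\<^sub>E i\<in>{..<cardO C (Cod C phi)}. unitU C (fib C phi i)) \<longleftrightarrow>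
        (\<forall>i<cardO C (Cod C phi). trivial_obj C (fib C phi i)) \<and> y = fibres C phi"
    using fibres_in_unit_family_iff unit_family_eq_fibres by metis
  then show ?thesis unfolding tensor_def fibrewise_trivial_def by auto
qed

lemma tensor_unit_unit_elim:
  assumes "e \<in> tensor C (tensor C X (unitU C)) (unitU C) c"
  obtains x psi phi where "e = ((x, psi, fibres C psi), phi, fibres C phi)"
    "fibrewise_trivial C phi" "fibrewise_trivial C psi" "Dom C phi = c" "Cod C phi = Dom C psi"
    "x \<in> X (Cod C psi)"
  using assms by (cases e) (auto simp: tensor_unit_iff)

definition module_to_presheaf :: "('o,'m) opcat \<Rightarrow> ('o,'m,'x) rmod \<Rightarrow> ('o,'m,'x) psh" where
  "module_to_presheaf C M = (fst M, \<lambda>phi x. if fibrewise_trivial C phi \<and> x \<in> fst M (Cod C phi)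
                                            then snd M (x, phi, fibres C phi) else undefined)"

definition presheaf_to_module :: "('o,'m) opcat \<Rightarrow> ('o,'m,'x) psh \<Rightarrow> ('o,'m,'x) rmod" where
  "presheaf_to_module C F = (fst F, \<lambda>e. if e \<in> (\<Union>c\<in>Obj C. tensor C (fst F) (unitU C) c)
                                         then snd F (fst (snd e)) (fst e) else undefined)"

lemma fst_module_to_presheaf [simp]: "fst (module_to_presheaf C M) = fst M"
  by (simp add: module_to_presheaf_def)

lemma fst_presheaf_to_module [simp]: "fst (presheaf_to_module C F) = fst F"
  by (simp add: presheaf_to_module_def)

lemma fpos_singleton: "fpos {j} j = 0"
  unfolding fpos_def by simp

context
  fixes C :: "('o,'m) opcat"
  assumes oc: "operadic_category C"
begin

lemma operadic_category_is_category: "is_category C"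
  using oc by (simp add: operadic_category_def)

lemmas categoryD = is_categoryD[OF operadic_category_is_category]

lemma fibrewise_trivial_Idm:
  assumes "a \<in> Obj C"
  shows "fibrewise_trivial C (Idm C a)"
proof -
  have "\<forall>i<cardO C a. trivial_obj C (fib C (Idm C a) i)"
    using oc assms unfolding operadic_category_def by blast
  then show ?thesis using assms categoryD by (simp add: fibrewise_trivial_def)
qed

lemma rhoC_eq:
  assumes "c \<in> Obj C"
  shows "rhoC C c x = (x, Idm C c, fibres C (Idm C c))"
  using assms categoryD by (simp add: rhoC_def fibres_def)

lemma fibm_typing:
  assumes "phi \<in> Arr C" "psi \<in> Arr C" "Cod C phi = Dom C psi" "i < cardO C (Cod C psi)"
  shows "fibm C phi psi i \<in> Arr C" "Dom C (fibm C phi psi i) = fib C (Comp C psi phi) i"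
    "Cod C (fibm C phi psi i) = fib C psi i"
  using oc assms unfolding operadic_category_def by - (elim conjE, blast)+

lemma card_fib:
  assumes "psi \<in> Arr C" "i < cardO C (Cod C psi)"
  shows "cardO C (fib C psi i) = card (fpre C psi i)"
  using oc assms by (simp add: operadic_category_def)

lemma fib_double_slice:
  assumes "phi \<in> Arr C" "psi \<in> Arr C" "Cod C phi = Dom C psi" "j < cardO C (Dom C psi)"
  shows "fib C phi j = fib C (fibm C phi psi (cardM C psi j)) (fpos (fpre C psi (cardM C psi j)) j)"
  using oc assms unfolding operadic_category_def by blast

text \<open>Since the fibre of g over i is trivial, it has a single point j, and the double slice
  condition identifies the fibre of f over j with the fibre over 0 of the induced map of fibres,
  which is its domain, the fibre of g f over i.\<close>
lemma fibre_Comp_fibrewise_trivial: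
  assumes f: "fibrewise_trivial C f" and g: "fibrewise_trivial C g"
    and fg: "Cod C f = Dom C g" and i: "i < cardO C (Cod C g)"
  obtains j where "fpre C g i = {j}" "j < cardO C (Cod C f)" "fib C f j = fib C (Comp C g f) i"
proof -
  have fA: "f \<in> Arr C" and gA: "g \<in> Arr C" using f g by (auto simp: fibrewise_trivial_def)
  have triv: "trivial_obj C (fib C g i)" using g i by (simp add: fibrewise_trivial_def)
  have "card (fpre C g i) = 1"
    using card_fib[OF gA i] triv by (simp add: trivial_obj_def)
  then obtain j where j: "fpre C g i = {j}" using card_1_singletonE by blast
  then have jdom: "j < cardO C (Dom C g)" and gj: "cardM C g j = i" by (auto simp: fpre_def)
  have "fib C f j = fib C (fibm C f g i) (fpos (fpre C g i) j)"
    using fib_double_slice[OF fA gA fg jdom] gj by simp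
  also have "\<dots> = fib C (fibm C f g i) 0" unfolding j by (simp add: fpos_singleton)
  also have "\<dots> = fib C (Comp C g f) i"
    using triv fibm_typing[OF fA gA fg i] unfolding trivial_obj_def by simp
  finally show ?thesis using that j jdom fg by simp
qed

lemma fibrewise_trivial_Comp:
  assumes f: "fibrewise_trivial C f" and g: "fibrewise_trivial C g" and fg: "Cod C f = Dom C g"
  shows "fibrewise_trivial C (Comp C g f)"
proof -
  have fA: "f \<in> Arr C" and gA: "g \<in> Arr C" using f g by (auto simp: fibrewise_trivial_def)
  have "trivial_obj C (fib C (Comp C g f) i)" if "i < cardO C (Cod C g)" for i
    using fibre_Comp_fibrewise_trivial[OF f g fg that] f by (metis fibrewise_trivial_def)
  then show ?thesis using categoryD(6,8)[OF fA gA fg] by (simp add: fibrewise_trivial_def)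
qed

lemma one_lam_assocC_fibrewise_trivial:
  assumes f: "fibrewise_trivial C f" and g: "fibrewise_trivial C g" and fg: "Cod C f = Dom C g"
  shows "one_lam C (assocC C ((x, g, fibres C g), f, fibres C f))
           = (x, Comp C g f, fibres C (Comp C g f))"
proof -
  have fA: "f \<in> Arr C" and gA: "g \<in> Arr C" using f g by (auto simp: fibrewise_trivial_def)
  have cod: "Cod C (Comp C g f) = Cod C g" using categoryD(8)[OF fA gA fg] .
  have "lamU (fibres C g i, fibm C f g i,
          \<lambda>k\<in>{..<cardO C (fib C g i)}. fibres C f (sorted_list_of_set (fpre C g i) ! k))
        = fib C (Comp C g f) i" if i: "i < cardO C (Cod C g)" for i
  proof -
    obtain j where "fpre C g i = {j}" "j < cardO C (Cod C f)" "fib C f j = fib C (Comp C g f) i"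
      by (rule fibre_Comp_fibrewise_trivial[OF f g fg i])
    moreover have "cardO C (fib C g i) = 1"
      using g i by (simp add: fibrewise_trivial_def trivial_obj_def)
    ultimately show ?thesis by (simp add: lamU_def fibres_def)
  qed
  then show ?thesis
    unfolding assocC_def one_lam_def using cod by (auto simp: fibres_def intro!: restrict_ext)
qed

lemma presheaf_to_module_action:
  assumes "fibrewise_trivial C phi" "x \<in> F0 (Cod C phi)"
  shows "snd (presheaf_to_module C (F0, F1)) (x, phi, fibres C phi) = F1 phi x"
  using assms categoryD(1)
  by (auto simp: presheaf_to_module_def tensor_unit_iff fibrewise_trivial_def)

lemma is_presheaf_module_to_presheaf:
  assumes M: "is_right_U_module C (X, r)"
  shows "is_presheaf (FwTriv C) (module_to_presheaf C (X, r))"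
proof -
  have act: "r (x, f, fibres C f) \<in> X (Dom C f)"
    if "fibrewise_trivial C f" "x \<in> X (Cod C f)" for f x
    using M that categoryD(1)
    by (auto simp: is_right_U_module_def tensor_unit_iff fibrewise_trivial_def)
  have unit: "r (x, Idm C a, fibres C (Idm C a)) = x" if "a \<in> Obj C" "x \<in> X a" for a x
    using M that by (simp add: is_right_U_module_def rhoC_eq)
  have assoc: "r (r (x, g, fibres C g), f, fibres C f) = r (x, Comp C g f, fibres C (Comp C g f))"
    if f: "fibrewise_trivial C f" and g: "fibrewise_trivial C g" and fg: "Cod C f = Dom C g"
      and x: "x \<in> X (Cod C g)" for f g x
  proof -
    let ?e = "((x, g, fibres C g), f, fibres C f)"
    have "?e \<in> tensor C (tensor C X (unitU C)) (unitU C) (Dom C f)"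
      using that by (simp add: tensor_unit_iff)
    moreover have "Dom C f \<in> Obj C" using f categoryD(1) by (simp add: fibrewise_trivial_def)
    ultimately have "r (r_one r ?e) = r (one_lam C (assocC C ?e))"
      using M unfolding is_right_U_module_def by blast
    then show ?thesis by (simp add: r_one_def one_lam_assocC_fibrewise_trivial[OF f g fg])
  qed
  show ?thesis
    unfolding is_presheaf_def module_to_presheaf_def FwTriv_def
    using M act unit assoc fibrewise_trivial_Idm fibrewise_trivial_Comp categoryD
    by (auto simp: is_right_U_module_def fibrewise_trivial_def)
qed

lemma is_right_U_module_presheaf_to_module:
  assumes F: "is_presheaf (FwTriv C) (F0, F1)"
  shows "is_right_U_module C (presheaf_to_module C (F0, F1))"
proof -
  let ?r = "snd (presheaf_to_module C (F0, F1))"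
  have act: "F1 f x \<in> F0 (Dom C f)" if "fibrewise_trivial C f" "x \<in> F0 (Cod C f)" for f x
    using F that by (simp add: is_presheaf_def FwTriv_def)
  have functorial: "F1 (Comp C g f) x = F1 f (F1 g x)"
    if "fibrewise_trivial C f" "fibrewise_trivial C g" "Cod C f = Dom C g" "x \<in> F0 (Cod C g)"
    for f g x
    using F that by (simp add: is_presheaf_def FwTriv_def)
  have assoc: "?r (r_one ?r e) = ?r (one_lam C (assocC C e))"
    if e_in: "e \<in> tensor C (tensor C F0 (unitU C)) (unitU C) c" for e c
  proof -
    obtain x psi phi where e: "e = ((x, psi, fibres C psi), phi, fibres C phi)"
      and phi: "fibrewise_trivial C phi" and psi: "fibrewise_trivial C psi"
      and comp: "Cod C phi = Dom C psi" and x: "x \<in> F0 (Cod C psi)"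
      using e_in by (rule tensor_unit_unit_elim)
    have "?r (r_one ?r e) = F1 phi (F1 psi x)"
      using act[OF psi x] comp phi psi x by (simp add: e r_one_def presheaf_to_module_action)
    also have "\<dots> = F1 (Comp C psi phi) x" using functorial[OF phi psi comp x] ..
    also have "\<dots> = ?r (one_lam C (assocC C e))"
      using fibrewise_trivial_Comp[OF phi psi comp] x categoryD(8) phi psi comp
      by (simp add: e one_lam_assocC_fibrewise_trivial[OF phi psi comp] presheaf_to_module_action
          fibrewise_trivial_def)
    finally show ?thesis .
  qed
  show ?thesis
    unfolding is_right_U_module_def
    using F act assoc categoryD fibrewise_trivial_Idm
    by (auto simp: presheaf_to_module_def is_presheaf_def FwTriv_def tensor_unit_iff rhoC_eq
        presheaf_to_module_action)
qed

lemma presheaf_to_module_to_presheaf: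
  assumes "is_right_U_module C (X, r)"
  shows "presheaf_to_module C (module_to_presheaf C (X, r)) = (X, r)"
proof -
  have "snd (presheaf_to_module C (module_to_presheaf C (X, r))) e = r e" for e
    using assms unfolding is_right_U_module_def
    by (cases e) (auto simp: presheaf_to_module_def module_to_presheaf_def tensor_unit_iff)
  then show ?thesis by (simp add: prod_eq_iff fun_eq_iff)
qed

lemma module_to_presheaf_to_module:
  assumes "is_presheaf (FwTriv C) (F0, F1)"
  shows "module_to_presheaf C (presheaf_to_module C (F0, F1)) = (F0, F1)"
  using assms unfolding is_presheaf_def FwTriv_def
  by (auto simp: module_to_presheaf_def presheaf_to_module_action fun_eq_iff)

lemma is_psh_nat_module_map:
  assumes "is_module_map C (X, r) (Y, s) h"
  shows "is_psh_nat (FwTriv C) (module_to_presheaf C (X, r)) (module_to_presheaf C (Y, s)) h"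
  using assms categoryD(1,2)
  by (auto simp: is_psh_nat_def is_module_map_def module_to_presheaf_def FwTriv_def
      tensor_unit_iff fibrewise_trivial_def)

lemma is_module_map_psh_nat:
  assumes "is_psh_nat (FwTriv C) (F0, F1) (G0, G1) h"
  shows "is_module_map C (presheaf_to_module C (F0, F1)) (presheaf_to_module C (G0, G1)) h"
  using assms categoryD(1,2)
  by (auto simp: is_psh_nat_def is_module_map_def FwTriv_def tensor_unit_iff
      presheaf_to_module_def fibrewise_trivial_def)

end

definition module_to_presheaf_arr :: "('o,'m) opcat \<Rightarrow> ('o,'m,'x) rmod_arr \<Rightarrow> ('o,'m,'x) psh_arr" where
  "module_to_presheaf_arr C a =
     (case a of (M, N, f) \<Rightarrow> (module_to_presheaf C M, module_to_presheaf C N, f))"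

definition presheaf_to_module_arr :: "('o,'m) opcat \<Rightarrow> ('o,'m,'x) psh_arr \<Rightarrow> ('o,'m,'x) rmod_arr" where
  "presheaf_to_module_arr C a =
     (case a of (F, G, f) \<Rightarrow> (presheaf_to_module C F, presheaf_to_module C G, f))"

lemma is_functor_module_to_presheaf:
  assumes "operadic_category C"
  shows "is_functor (ModU C) (PSh (FwTriv C)) (module_to_presheaf C) (module_to_presheaf_arr C)"
  unfolding is_functor_def ModU_def PSh_def module_to_presheaf_arr_def
  using is_presheaf_module_to_presheaf[OF assms] is_psh_nat_module_map[OF assms]
  by (auto simp: module_to_presheaf_def)

lemma is_functor_presheaf_to_module:
  assumes "operadic_category C"
  shows "is_functor (PSh (FwTriv C)) (ModU C) (presheaf_to_module C) (presheaf_to_module_arr C)"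
  unfolding is_functor_def ModU_def PSh_def presheaf_to_module_arr_def
  using is_right_U_module_presheaf_to_module[OF assms] is_module_map_psh_nat[OF assms]
  by (auto simp: presheaf_to_module_def)

theorem proposition9p1:
  fixes C :: "('o,'m) opcat"
  assumes "operadic_category C"
  shows "equivalent_categories (ModU C :: (('o,'m,'x) rmod, ('o,'m,'x) rmod_arr) category)
                               (PSh (FwTriv C) :: (('o,'m,'x) psh, ('o,'m,'x) psh_arr) category)"
proof (rule inverse_functors_equivalent[OF is_functor_module_to_presheaf[OF assms]
      is_functor_presheaf_to_module[OF assms] _ _ _ _ identity_laws_ModU identity_laws_PSh])
  note inverse = presheaf_to_module_to_presheaf[OF assms] module_to_presheaf_to_module[OF assms]
  show "\<forall>M\<in>Obj (ModU C). presheaf_to_module C (module_to_presheaf C M) = M"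
    and "\<forall>F\<in>Obj (PSh (FwTriv C)). module_to_presheaf C (presheaf_to_module C F) = F"
    using inverse by (auto simp: ModU_def PSh_def)
  show "\<forall>f\<in>Arr (ModU C). presheaf_to_module_arr C (module_to_presheaf_arr C f) = f"
    and "\<forall>f\<in>Arr (PSh (FwTriv C)). module_to_presheaf_arr C (presheaf_to_module_arr C f) = f"
    using inverse
    by (auto simp: ModU_def PSh_def module_to_presheaf_arr_def presheaf_to_module_arr_def)
qed

end
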